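(* Let $\alpha\in\mathbb{R}$, let $p$ be a positive integer, $a\in\mathbb{R}$, and let $f$ be a real function defined on $\mathbb{N}_{a-p+1}=\{a-p+1,a-p+2,\dots\}$. Then for all $t\in\mathbb{N}_{a+p}$, $$\nabla_a^{-\alpha}\nabla^p f(t)=\nabla^p\nabla_a^{-\alpha}f(t)-\sum_{k=0}^{p-1}\frac{(t-a)^{\overline{\alpha-p+k}}}{\Gamma(\alpha+k-p+1)}\nabla^k f(a).$$
   Context: Notation: $\mathbb{N}_c=\{c,c+1,\dots\}$, $\rho(t)=t-1$, $\nabla g(t)=g(t)-g(t-1)$, $\nabla^m=\nabla(\nabla^{m-1})$. Rising factorial: $t^{\overline{\beta}}=\Gamma(t+\beta)/\Gamma(t)$ with $0^{\overline{\beta}}=0$; the reciprocal of $\Gamma$ at a pole is taken to be $0$. For $\gamma>0$ the nabla left fractional sum is $\nabla_a^{-\gamma}g(t)=\frac{1}{\Gamma(\gamma)}\sum_{s=a+1}^{t}(t-\rho(s))^{\overline{\gamma-1}}g(s)$, where a sum with upper limit smaller than lower limit is $0$ (so these sums vanish for $t\le a$). For $\beta>0$, let $n=[\beta]+1$ with $[\beta]$ the greatest integer strictly less than $\beta$; the nabla left fractional difference is $\nabla_a^{\beta}g(t)=\nabla^n\nabla_a^{-(n-\beta)}g(t)$ (the operator of order $0$ being the identity). In the claim, for $\alpha<0$ the symbol $\nabla_a^{-\alpha}$ means the nabla left fractional difference of order $-\alpha>0$, and for $\alpha=0$ it is the identity. *)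

theory Defs
  imports "HOL-Analysis.Analysis"
begin

text \<open>Rising factorial t^(beta) = Gamma(t+beta)/Gamma(t), with 0^(beta) = 0 and
  1/Gamma at a pole taken to be 0 (this is rGamma).\<close>
definition rising_fact :: "real \<Rightarrow> real \<Rightarrow> real" where
  "rising_fact t \<beta> = (if t = 0 then 0 else Gamma (t + \<beta>) * rGamma t)"

definition nabla :: "(real \<Rightarrow> real) \<Rightarrow> real \<Rightarrow> real" where
  "nabla g t = g t - g (t - 1)"

text \<open>Nabla left fractional sum of order gamma > 0 based at a:
  sum over s = a+1, ..., t (empty when t < a+1).\<close>
definition nabla_frac_sum :: "real \<Rightarrow> real \<Rightarrow> (real \<Rightarrow> real) \<Rightarrow> real \<Rightarrow> real" where
  "nabla_frac_sum a \<gamma> g t =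
     (\<Sum>j\<in>{1..nat \<lfloor>t - a\<rfloor>}. rising_fact (t - (a + real j - 1)) (\<gamma> - 1) * g (a + real j))
     / Gamma \<gamma>"

text \<open>Nabla left fractional difference of order beta > 0: with n = [beta] + 1 = ceiling beta,
  apply nabla^n to the fractional sum of order n - beta (identity if that order is 0).\<close>
definition nabla_frac_diff :: "real \<Rightarrow> real \<Rightarrow> (real \<Rightarrow> real) \<Rightarrow> real \<Rightarrow> real" where
  "nabla_frac_diff a \<beta> g =
     (nabla ^^ nat \<lceil>\<beta>\<rceil>)
       (if real_of_int \<lceil>\<beta>\<rceil> - \<beta> = 0 then g else nabla_frac_sum a (real_of_int \<lceil>\<beta>\<rceil> - \<beta>) g)"

definition nabla_frac :: "real \<Rightarrow> real \<Rightarrow> (real \<Rightarrow> real) \<Rightarrow> real \<Rightarrow> real" where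
  "nabla_frac a \<nu> g =
     (if \<nu> > 0 then nabla_frac_diff a \<nu> g
      else if \<nu> < 0 then nabla_frac_sum a (- \<nu>) g else g)"

end

theory Submission
  imports Defs
begin

(* Everything is evaluated on the lattice a + Z.  The coefficients
   are the values of the kernel  h(m, r) = m^(r rising) / Gamma(r + 1), which
   satisfies the Pascal-type rule  h(m, r) - h(m - 1, r) = h(m, r - 1)  (for m >= 2,
   or for every m if r is not an integer).
   1. Kernel facts: vanishing, a Pochhammer formula on positive integers, Pascal rule.
   2. Summation by parts for the fractional sum S_nu:
        S_nu (nabla g)(a+m) = nabla S_nu g (a+m) - h(m, nu-1) g(a),
      iterated p times by induction using the Pascal rule.
   3. Differencing the kernel in its first argument lowers its order by one; with
      linearity of nabla^N this transfers step 2 to the fractional difference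
      nabla^N S_nu of non-integer order.
   The theorem follows by cases: alpha > 0 (fractional sum), alpha a nonpositive
   integer (plain differences; the correction vanishes since 1/Gamma does), and
   alpha < 0 non-integer (fractional difference). *)

definition frac_kernel :: "real \<Rightarrow> real \<Rightarrow> real" where
  "frac_kernel m r = rising_fact m r * rGamma (r + 1)"

lemma frac_kernel_nonpos: "m \<in> \<int> \<Longrightarrow> m \<le> 0 \<Longrightarrow> frac_kernel m r = 0"
  by (simp add: frac_kernel_def rising_fact_def rGamma_eq_zero_iff nonpos_Ints_altdef)

lemma frac_kernel_pole: "r + 1 \<in> \<int>\<^sub>\<le>\<^sub>0 \<Longrightarrow> frac_kernel m r = 0"
  by (simp add: frac_kernel_def rGamma_eq_zero_iff)

lemma frac_kernel_Suc:
  assumes "r + 1 \<notin> \<int>\<^sub>\<le>\<^sub>0"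
  shows "frac_kernel (real (Suc N)) r = pochhammer (r + 1) N / fact N"
proof -
  have Gamma_ne: "Gamma (r + 1) \<noteq> 0" using assms by (simp add: Gamma_eq_zero_iff)
  have "Gamma (real (Suc N) + r) = pochhammer (r + 1) N * Gamma (r + 1)"
    using pochhammer_Gamma[OF assms, of N] Gamma_ne by (simp add: field_simps)
  moreover have "rGamma (real (Suc N)) = inverse (fact N)"
    using Gamma_fact[of N] by (simp add: rGamma_inverse_Gamma add.commute)
  ultimately show ?thesis
    using Gamma_ne by (simp add: frac_kernel_def rising_fact_def rGamma_inverse_Gamma field_simps)
qed

lemma pochhammer_pascal:
  fixes r :: real
  shows "pochhammer (r + 1) (Suc N) / fact (Suc N) - pochhammer (r + 1) N / fact N
           = pochhammer r (Suc N) / fact (Suc N)"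
proof -
  have rec: "pochhammer (r + 1) (Suc N) = (r + 1 + real N) * pochhammer (r + 1) N"
            "pochhammer r (Suc N) = r * pochhammer (r + 1) N"
    by (rule pochhammer_rec', rule pochhammer_rec)
  have "fact (Suc N) = (real N + 1) * (fact N :: real)" by simp
  moreover have "(fact N :: real) \<noteq> 0" "real N + 1 \<noteq> 0" by simp_all
  ultimately show ?thesis
    unfolding rec by (simp add: divide_simps) (simp add: algebra_simps)
qed

lemma nonpos_Ints_top:
  fixes r :: real
  assumes "r \<in> \<int>\<^sub>\<le>\<^sub>0" "r + 1 \<notin> \<int>\<^sub>\<le>\<^sub>0"
  shows "r = 0"
proof -
  obtain n where n: "r = - real n" using assms(1) by (auto elim!: nonpos_Ints_cases')
  show ?thesis
  proof (cases n)
    case (Suc k)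
    then have "r + 1 = - real k" using n by simp
    then show ?thesis using assms(2) by simp
  qed (use n in simp)
qed

(* Pascal rule for the kernel.  It fails only for m = 1 and integer r (e.g. r = 0),
   hence the hypothesis. *)
lemma frac_kernel_diff:
  fixes m :: int
  assumes "m \<ge> 2 \<or> r \<notin> \<int>"
  shows "frac_kernel (of_int m) r - frac_kernel (of_int m - 1) r = frac_kernel (of_int m) (r - 1)"
proof -
  consider "m \<le> 0" | "m = 1" | N where "m = int (Suc (Suc N))"
  proof -
    have "m \<le> 0 \<or> m = 1 \<or> m = int (Suc (Suc (nat (m - 2))))" by linarith
    then show ?thesis using that by blast
  qed
  then show ?thesis
  proof cases
    case 1
    then show ?thesis by (simp add: frac_kernel_nonpos)
  next
    case 2
    with assms have "r \<notin> \<int>" by auto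
    then have "r + 1 \<notin> \<int>\<^sub>\<le>\<^sub>0" "r \<notin> \<int>\<^sub>\<le>\<^sub>0"
      by (auto dest: nonpos_Ints_Int)
    then show ?thesis
      using 2 frac_kernel_Suc[of r 0] frac_kernel_Suc[of "r - 1" 0] by (simp add: frac_kernel_nonpos)
  next
    case (3 N)
    have m: "real_of_int m = real (Suc (Suc N))" "real_of_int m - 1 = real (Suc N)"
      using 3 by simp_all
    consider "r + 1 \<in> \<int>\<^sub>\<le>\<^sub>0" | "r = 0" | "r + 1 \<notin> \<int>\<^sub>\<le>\<^sub>0" "r \<notin> \<int>\<^sub>\<le>\<^sub>0"
      using nonpos_Ints_top[of r] by blast
    then show ?thesis
    proof cases
      case 1
      then show ?thesis by (simp add: frac_kernel_pole plus_one_in_nonpos_Ints_imp)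
    next
      case 2
      then show ?thesis
        unfolding m using frac_kernel_Suc[of 0 N] frac_kernel_Suc[of 0 "Suc N"]
        by (simp add: frac_kernel_pole flip: pochhammer_fact)
    next
      case 3
      then show ?thesis
        unfolding m using frac_kernel_Suc[of r N] frac_kernel_Suc[of r "Suc N"]
          frac_kernel_Suc[of "r - 1" "Suc N"] pochhammer_pascal[of r N] by simp
    qed
  qed
qed

lemma nabla_frac_sum_lattice:
  "nabla_frac_sum a \<nu> g (a + real m) =
     (\<Sum>i<m. rising_fact (real m - real i) (\<nu> - 1) * g (a + real i + 1)) / Gamma \<nu>"
  unfolding nabla_frac_sum_def by (simp add: sum.atLeast1_atMost_eq add_ac)

lemma nabla_frac_sum_before_start: "m \<le> 0 \<Longrightarrow> nabla_frac_sum a \<nu> g (a + of_int m) = 0"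
  unfolding nabla_frac_sum_def by simp

(* Summation by parts: the boundary term at s = a + 1 produces h(m, nu - 1) g(a). *)
lemma nabla_frac_sum_nabla:
  fixes m :: int
  shows "nabla_frac_sum a \<nu> (nabla g) (a + of_int m) =
     nabla (nabla_frac_sum a \<nu> g) (a + of_int m) - frac_kernel (of_int m) (\<nu> - 1) * g a"
proof (cases "m \<le> 0")
  case True
  then show ?thesis
    using nabla_frac_sum_before_start[of "m - 1" a \<nu> g]
    by (simp add: nabla_def nabla_frac_sum_before_start frac_kernel_nonpos add_diff_eq)
next
  case False
  then obtain M where M: "m = int (Suc M)" by (metis gr0_implies_Suc not_le pos_int_cases)
  define w where "w = (\<lambda>x. rising_fact x (\<nu> - 1))"
  have pts: "a + of_int m = a + real (Suc M)" "a + of_int m - 1 = a + real M"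
    using M by simp_all
  define A where "A = (\<Sum>i<Suc M. w (real (Suc M) - real i) * g (a + real i + 1))"
  define B where "B = (\<Sum>i<Suc M. w (real (Suc M) - real i) * g (a + real i))"
  define C where "C = (\<Sum>i<M. w (real M - real i) * g (a + real i + 1))"
  have lhs: "nabla_frac_sum a \<nu> (nabla g) (a + of_int m) = (A - B) / Gamma \<nu>"
    unfolding pts nabla_frac_sum_lattice A_def B_def w_def
    by (simp add: nabla_def algebra_simps sum_subtractf)
  have rhs: "nabla (nabla_frac_sum a \<nu> g) (a + of_int m) = (A - C) / Gamma \<nu>"
    unfolding nabla_def pts nabla_frac_sum_lattice A_def C_def w_def
    by (simp add: diff_divide_distrib nabla_frac_sum_lattice)
  have "B = w (real (Suc M)) * g a + C"
    unfolding B_def C_def by (subst sum.lessThan_Suc_shift) (simp add: add_ac)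
  moreover have "frac_kernel (of_int m) (\<nu> - 1) = w (real (Suc M)) * rGamma \<nu>"
    using M by (simp add: frac_kernel_def w_def)
  ultimately show ?thesis
    unfolding lhs rhs by (simp add: rGamma_inverse_Gamma divide_inverse algebra_simps)
qed

(* Iterated summation by parts.  The Pascal rule is needed at the points a + m and
   a + m - 1, which is why m >= p is required unless nu is not an integer. *)
lemma nabla_frac_sum_nabla_pow:
  fixes m :: int
  assumes "m \<ge> int p \<or> \<nu> \<notin> \<int>"
  shows "nabla_frac_sum a \<nu> ((nabla ^^ p) f) (a + of_int m) =
     (nabla ^^ p) (nabla_frac_sum a \<nu> f) (a + of_int m)
     - (\<Sum>k<p. frac_kernel (of_int m) (\<nu> - real p + real k) * (nabla ^^ k) f a)"
  using assms
proof (induction p arbitrary: m)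
  case 0
  show ?case by simp
next
  case (Suc p)
  define S where "S = nabla_frac_sum a \<nu>"
  define c where "c = (\<lambda>k. (nabla ^^ k) f a)"
  define K where "K = (\<lambda>x k. frac_kernel x (\<nu> - real p + real k))"
  have IH: "S ((nabla ^^ p) f) x = (nabla ^^ p) (S f) x - (\<Sum>k<p. K (x - a) k * c k)"
    if "x = a + of_int m \<or> x = a + of_int m - 1" for x
    using that Suc.IH[of m] Suc.IH[of "m - 1"] Suc.prems unfolding S_def c_def K_def by (auto simp: add_diff_eq)
  have pascal: "K (of_int m) k - K (of_int m - 1) k = frac_kernel (of_int m) (\<nu> - real (Suc p) + real k)"
    if "k < p" for k
  proof -
    have "m \<ge> 2 \<or> \<nu> - real p + real k \<notin> \<int>"
      using Suc.prems that by auto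
    from frac_kernel_diff[OF this] show ?thesis unfolding K_def by (simp add: algebra_simps)
  qed
  have "S ((nabla ^^ Suc p) f) (a + of_int m)
        = nabla (S ((nabla ^^ p) f)) (a + of_int m) - frac_kernel (of_int m) (\<nu> - 1) * c p"
    unfolding S_def c_def by (simp add: nabla_frac_sum_nabla)
  also have "\<dots> = (nabla ^^ Suc p) (S f) (a + of_int m)
       - ((\<Sum>k<p. (K (of_int m) k - K (of_int m - 1) k) * c k) + frac_kernel (of_int m) (\<nu> - 1) * c p)"
    unfolding nabla_def[of "S ((nabla ^^ p) f)"] by (simp add: IH nabla_def sum_subtractf left_diff_distrib)
  also have "(\<Sum>k<p. (K (of_int m) k - K (of_int m - 1) k) * c k)
     = (\<Sum>k<p. frac_kernel (of_int m) (\<nu> - real (Suc p) + real k) * c k)"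
    by (rule sum.cong) (simp_all add: pascal)
  finally show ?case unfolding S_def c_def by simp
qed

lemma nabla_pow_Suc: "(nabla ^^ Suc n) g x = (nabla ^^ n) g x - (nabla ^^ n) g (x - 1)"
  by (simp add: nabla_def)

lemma nabla_pow_diff: "(nabla ^^ n) (\<lambda>s. u s - v s) = (\<lambda>s. (nabla ^^ n) u s - (nabla ^^ n) v s)"
  by (induction n) (simp_all add: nabla_def algebra_simps)

lemma nabla_pow_scale: "(nabla ^^ n) (\<lambda>s. u s * c) = (\<lambda>s. (nabla ^^ n) u s * c)"
  by (induction n) (simp_all add: nabla_def algebra_simps)

lemma nabla_pow_sum: "(nabla ^^ n) (\<lambda>s. \<Sum>k\<in>K. u k s) = (\<lambda>s. \<Sum>k\<in>K. (nabla ^^ n) (u k) s)"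
  by (induction n) (simp_all add: nabla_def sum_subtractf)

lemma nabla_pow_commute: "(nabla ^^ n) ((nabla ^^ p) f) = (nabla ^^ p) ((nabla ^^ n) f)"
  by (metis add.commute comp_apply funpow_add)

lemma nabla_pow_lattice_cong:
  assumes "\<And>j::int. \<phi> (a + of_int j) = \<psi> (a + of_int j)"
  shows "(nabla ^^ n) \<phi> (a + of_int j) = (nabla ^^ n) \<psi> (a + of_int j)"
proof (induction n arbitrary: j)
  case 0
  then show ?case using assms by simp
next
  case (Suc n)
  then show ?case
    unfolding nabla_pow_Suc using Suc.IH[of j] Suc.IH[of "j - 1"] by (simp add: add_diff_eq)
qed

lemma nabla_pow_frac_kernel:
  assumes "r \<notin> \<int>"
  shows "(nabla ^^ n) (\<lambda>s. frac_kernel (s - a) r) (a + of_int j) = frac_kernel (of_int j) (r - real n)"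
proof (induction n arbitrary: j)
  case 0
  then show ?case by simp
next
  case (Suc n)
  have "(nabla ^^ Suc n) (\<lambda>s. frac_kernel (s - a) r) (a + of_int j)
      = frac_kernel (of_int j) (r - real n) - frac_kernel (of_int j - 1) (r - real n)"
    unfolding nabla_pow_Suc using Suc.IH[of j] Suc.IH[of "j - 1"] by (simp add: add_diff_eq)
  also have "\<dots> = frac_kernel (of_int j) (r - real n - 1)"
    using frac_kernel_diff[of j "r - real n"] assms by simp
  finally show ?case by (simp add: algebra_simps)
qed

(* The commutation rule for the fractional difference nabla^N S_nu of non-integer
   order: apply nabla^N to nabla_frac_sum_nabla_pow, valid on all of a + Z. *)
lemma nabla_pow_frac_sum_nabla_pow:
  fixes M :: int
  assumes "\<nu> \<notin> \<int>"
  shows "(nabla ^^ N) (nabla_frac_sum a \<nu> ((nabla ^^ p) f)) (a + of_int M) =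
     (nabla ^^ p) ((nabla ^^ N) (nabla_frac_sum a \<nu> f)) (a + of_int M)
     - (\<Sum>k<p. frac_kernel (of_int M) (\<nu> - real N - real p + real k) * (nabla ^^ k) f a)"
proof -
  define \<psi> where "\<psi> = (\<lambda>s. (nabla ^^ p) (nabla_frac_sum a \<nu> f) s
     - (\<Sum>k<p. frac_kernel (s - a) (\<nu> - real p + real k) * (nabla ^^ k) f a))"
  have "nabla_frac_sum a \<nu> ((nabla ^^ p) f) (a + of_int j) = \<psi> (a + of_int j)" for j :: int
    unfolding \<psi>_def using nabla_frac_sum_nabla_pow[of p j \<nu> a f] assms by simp
  then have "(nabla ^^ N) (nabla_frac_sum a \<nu> ((nabla ^^ p) f)) (a + of_int M)
      = (nabla ^^ N) \<psi> (a + of_int M)"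
    by (rule nabla_pow_lattice_cong)
  also have "\<dots> = (nabla ^^ N) ((nabla ^^ p) (nabla_frac_sum a \<nu> f)) (a + of_int M)
      - (\<Sum>k<p. (nabla ^^ N) (\<lambda>s. frac_kernel (s - a) (\<nu> - real p + real k)) (a + of_int M)
                 * (nabla ^^ k) f a)"
    unfolding \<psi>_def nabla_pow_diff nabla_pow_sum nabla_pow_scale ..
  also have "\<dots> = (nabla ^^ p) ((nabla ^^ N) (nabla_frac_sum a \<nu> f)) (a + of_int M)
      - (\<Sum>k<p. frac_kernel (of_int M) (\<nu> - real N - real p + real k) * (nabla ^^ k) f a)"
    using assms by (simp add: nabla_pow_frac_kernel nabla_pow_commute algebra_simps)
  finally show ?thesis .
qed

lemma nabla_frac_integer_order:
  assumes "\<nu> \<in> \<int>" "\<nu> \<ge> 0"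
  shows "nabla_frac a \<nu> g = (nabla ^^ nat \<lceil>\<nu>\<rceil>) g"
  using assms by (auto simp: nabla_frac_def nabla_frac_diff_def elim!: Ints_cases)

lemma nabla_frac_fractional_order:
  assumes "\<nu> > 0" "\<nu> \<notin> \<int>"
  shows "nabla_frac a \<nu> g = (nabla ^^ nat \<lceil>\<nu>\<rceil>) (nabla_frac_sum a (of_int \<lceil>\<nu>\<rceil> - \<nu>) g)"
proof -
  have "of_int \<lceil>\<nu>\<rceil> - \<nu> \<noteq> 0" using assms(2) by (metis Ints_of_int eq_iff_diff_eq_0)
  then show ?thesis using assms(1) by (simp add: nabla_frac_def nabla_frac_diff_def)
qed

theorem theorem2p7:
  fixes \<alpha> a :: real and p :: nat and f :: "real \<Rightarrow> real" and t :: real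
  assumes "p \<ge> 1"
    and "t \<in> {a + real p + real n | n. n \<in> (UNIV :: nat set)}"
  shows "nabla_frac a (- \<alpha>) ((nabla ^^ p) f) t =
           (nabla ^^ p) (nabla_frac a (- \<alpha>) f) t
           - (\<Sum>k<p. rising_fact (t - a) (\<alpha> - real p + real k)
                       * rGamma (\<alpha> + real k - real p + 1) * (nabla ^^ k) f a)"
proof -
  obtain n where "t = a + real p + real n" using assms(2) by auto
  then obtain M :: int where t: "t = a + of_int M" and M: "M \<ge> int p"
    by (intro that[of "int p + int n"]) simp_all
  have correction: "(\<Sum>k<p. rising_fact (t - a) (\<alpha> - real p + real k)
                       * rGamma (\<alpha> + real k - real p + 1) * (nabla ^^ k) f a)
      = (\<Sum>k<p. frac_kernel (of_int M) (\<alpha> - real p + real k) * (nabla ^^ k) f a)"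
    unfolding t frac_kernel_def by (intro sum.cong) (simp_all add: algebra_simps)
  consider "\<alpha> > 0" | "\<alpha> \<in> \<int>" "\<alpha> \<le> 0" | "\<alpha> < 0" "\<alpha> \<notin> \<int>"
    by (cases "\<alpha> \<in> \<int>") force+
  then have "nabla_frac a (- \<alpha>) ((nabla ^^ p) f) (a + of_int M) =
      (nabla ^^ p) (nabla_frac a (- \<alpha>) f) (a + of_int M)
      - (\<Sum>k<p. frac_kernel (of_int M) (\<alpha> - real p + real k) * (nabla ^^ k) f a)"
  proof cases
    case 1
    then show ?thesis
      using nabla_frac_sum_nabla_pow[of p M \<alpha> a f] M by (simp add: nabla_frac_def)
  next
    case 2
    have "frac_kernel (of_int M) (\<alpha> - real p + real k) = 0" if "k < p" for k
    proof (rule frac_kernel_pole)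
      obtain z where "\<alpha> = of_int z" "z \<le> 0" using 2 by (auto elim!: Ints_cases)
      then show "\<alpha> - real p + real k + 1 \<in> \<int>\<^sub>\<le>\<^sub>0"
        using that nonpos_Ints_of_int[of "z - int p + int k + 1"] by simp
    qed
    then show ?thesis
      using 2 by (simp add: nabla_frac_integer_order nabla_pow_commute)
  next
    case 3
    define \<nu> where "\<nu> = of_int \<lceil>- \<alpha>\<rceil> - (- \<alpha>)"
    have "\<nu> \<notin> \<int>" "\<nu> - real (nat \<lceil>- \<alpha>\<rceil>) = \<alpha>"
      using 3 by (simp_all add: \<nu>_def)
    then show ?thesis
      using nabla_pow_frac_sum_nabla_pow[of \<nu> "nat \<lceil>- \<alpha>\<rceil>" a p f M]
        nabla_frac_fractional_order[of "- \<alpha>"] 3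
      by (simp add: \<nu>_def)
  qed
  then show ?thesis unfolding correction unfolding t .
qed

end
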